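(* In the single-component setting, suppose $\sigma\le1$, $\sigma\le\frac{4\sqrt2}{\sqrt\pi}$, $\gamma^\star_\sigma\le\min\{1,\frac1{4\sqrt\rho}\}$ where $\gamma^\star_\sigma=\sigma^2+\sigma\sqrt{2\log\frac{4\sqrt2}{\sqrt\pi\sigma}}$, $\sigma^2\rho^2/\nu\le1/8$, and $L(w)\le\tilde\kappa(\rho,\nu)$. Then $\frac{\partial}{\partial\sigma}L(w)\ge p(0)\,\sigma\Big(\frac{\sqrt\pi}{11\sqrt\rho}\Big(\frac{\sqrt\nu}{2p(0)\sqrt\pi}\Big)^{\frac\nu{4\rho}}-2\sqrt2\max\Big\{1,\Big(\frac{\sqrt\rho}{2p(0)\sqrt\pi}\Big)^{\frac\nu{8\rho}}\Big\}\Big)$.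
   Context: Single-component setting: $y$ uniform on $\{\pm1\}$; $x=(x_1,x_2)$, $x_1\in\mathbb{R}^{d_1}$, $x_2\sim\mathcal{N}(0,\Sigma_2)$ with $\Sigma_2\succ0$ independent of $x_1$. $\ell_{exp}(t)=\exp(-|t|)$, $L(w)=\mathbb{E}[\ell_{exp}(w^\top x)]$. For fixed $w=(w_1,w_2)$: $\sigma=\sqrt{w_2^\top\Sigma_2w_2}$; $p$ is the density of $\mu=w_1^\top x_1$, assumed such that $\log p$ is differentiable, $\nu$-strongly concave and $\rho$-smooth (i.e. $-\rho\le(\log p)''\le-\nu$) for some $0<\nu\le\rho$. $L(w)=\mathbb{E}_\mu[g_\sigma(\mu)]$ with $g_\sigma(\mu)=\mathbb{E}_{Z\sim\mathcal{N}(0,1)}[\ell_{exp}(\mu+\sigma Z)]$, and $\frac{\partial}{\partial\sigma}L(w)$ is the derivative in $\sigma$ with the law of $\mu$ held fixed. Constants: $p^\star(\rho,\nu)=\frac{\sqrt\nu}{2\sqrt\pi}\min\{1,\frac{\sqrt\nu}{\sqrt\rho}(\frac{\sqrt\pi}{44\sqrt{2\rho}})^{8\rho/\nu}\}$ and $\tilde\kappa(\rho,\nu)=\min\Big\{\frac{\sqrt\pi}{4\sqrt\rho}\,p^\star(\rho,\nu)^{1-\frac{\nu}{4\rho}}\big(\frac{\nu}{2\sqrt\pi}\big)^{\frac{\nu}{4\rho}},\ \frac{\sqrt\nu}{8\sqrt{2\pi}(\sqrt\rho+\sqrt2)}\exp\big(-(\frac{\sqrt\rho+4}{2\sqrt\nu})^2\big)\Big\}$.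 *)

theory Defs
  imports "HOL-Probability.Probability"
begin

definition lexp :: "real \<Rightarrow> real" where
  "lexp t = exp (- \<bar>t\<bar>)"

definition gsig :: "real \<Rightarrow> real \<Rightarrow> real" where
  "gsig s \<mu> = (LINT z|lborel. std_normal_density z * lexp (\<mu> + s * z))"

(* L as a function of sigma, with the law (density p) of mu = w1^T x1 held fixed:
   L = E_mu [ g_sigma(mu) ] *)
definition Lsig :: "(real \<Rightarrow> real) \<Rightarrow> real \<Rightarrow> real" where
  "Lsig p s = (LINT \<mu>|lborel. p \<mu> * gsig s \<mu>)"

definition pstar :: "real \<Rightarrow> real \<Rightarrow> real" where
  "pstar \<rho> \<nu> = sqrt \<nu> / (2 * sqrt pi) *
     min 1 (sqrt \<nu> / sqrt \<rho> * (sqrt pi / (44 * sqrt (2 * \<rho>))) powr (8 * \<rho> / \<nu>))"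

definition kappa_tilde :: "real \<Rightarrow> real \<Rightarrow> real" where
  "kappa_tilde \<rho> \<nu> = min
     (sqrt pi / (4 * sqrt \<rho>) * pstar \<rho> \<nu> powr (1 - \<nu> / (4 * \<rho>)) *
        (\<nu> / (2 * sqrt pi)) powr (\<nu> / (4 * \<rho>)))
     (sqrt \<nu> / (8 * sqrt (2 * pi) * (sqrt \<rho> + sqrt 2)) *
        exp (- (((sqrt \<rho> + 4) / (2 * sqrt \<nu>))\<^sup>2)))"

definition gamma_star :: "real \<Rightarrow> real" where
  "gamma_star s = s\<^sup>2 + s * sqrt (2 * ln (4 * sqrt 2 / (sqrt pi * s)))"

end

theory Submission
  imports Defs "HOL-Real_Asymp.Real_Asymp"
begin

text \<open>
  Let \<open>F(y) = \<integral> p(\<mu>) exp(-|\<mu> - y|) d\<mu>\<close> be the Laplace smoothing of the density of \<open>\<mu>\<close>.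
  By Fubini and the symmetry of the Gaussian, \<open>L(\<sigma>) = E F(\<sigma>Z)\<close>.  The function \<open>F\<close> is
  1-Lipschitz with \<open>F' = G\<close> and \<open>G' = F - 2p\<close>, so differentiating under the integral and
  Gaussian integration by parts (Stein's identity) give
  \<open>\<partial>\<^sub>\<sigma>L = \<sigma> (L(\<sigma>) - 2 E p(\<sigma>Z))\<close>.

  Strong log-concavity sandwiches \<open>p\<close> between two Gaussians sharing the slope
  \<open>d = (log p)'(0)\<close>.  The upper one gives \<open>E p(\<sigma>Z) \<le> p(0) exp((d\<sigma>)\<^sup>2/2)\<close>, which the
  normalisation of the lower one controls for small \<open>\<sigma>\<close>.  The lower one gives
  \<open>L(\<sigma>) \<ge> F(0)/5 \<ge> p(0) \<surd>(\<pi>/\<rho>) exp(d\<^sup>2/(8\<rho>))/5\<close> once \<open>d\<^sup>2 > 4\<close>; and \<open>d\<^sup>2 > 4\<close> is forced by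
  the smallness of \<open>L\<close>, since for \<open>d\<^sup>2 \<le> 4\<close> the density would put too much mass near \<open>0\<close>.
\<close>

subsection \<open>Gaussian integrals\<close>

lemma has_bochner_integral_gaussian:
  fixes a b :: real
  assumes b: "0 < b"
  shows "has_bochner_integral lborel (\<lambda>x. exp (a * x - b * x\<^sup>2 / 2))
           (sqrt (2 * pi / b) * exp (a\<^sup>2 / (2 * b)))"
proof -
  define C where "C = sqrt (2 * pi / b) * exp (a\<^sup>2 / (2 * b))"
  have eq: "exp (a * x - b * x\<^sup>2 / 2) = C * normal_density (a / b) (1 / sqrt b) x" for x
  proof -
    have density: "normal_density (a / b) (1 / sqrt b) x
        = sqrt (b / (2 * pi)) * exp (- (x - a / b)\<^sup>2 * b / 2)"
      using b unfolding normal_density_def by (simp add: power_divide real_sqrt_divide)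
    have square: "a * x - b * x\<^sup>2 / 2 = a\<^sup>2 / (2 * b) + (- (x - a / b)\<^sup>2 * b / 2)"
      using b by (simp add: field_simps power2_eq_square)
    have sqrt_inverse: "sqrt (2 * pi / b) * sqrt (b / (2 * pi)) = 1"
      using b by (simp add: real_sqrt_mult[symmetric])
    have "C * normal_density (a / b) (1 / sqrt b) x
        = (sqrt (2 * pi / b) * sqrt (b / (2 * pi)))
          * (exp (a\<^sup>2 / (2 * b)) * exp (- (x - a / b)\<^sup>2 * b / 2))"
      unfolding C_def density by (simp only: ac_simps)
    also have "\<dots> = exp (a * x - b * x\<^sup>2 / 2)"
      unfolding sqrt_inverse square exp_add by simp
    finally show ?thesis by simp
  qed
  have "has_bochner_integral lborel (normal_density (a / b) (1 / sqrt b)) 1"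
    using b integrable_normal_density integral_normal_density
    by (simp add: has_bochner_integral_iff)
  then have "has_bochner_integral lborel (\<lambda>x. C * normal_density (a / b) (1 / sqrt b) x) (C * 1)"
    by (rule has_bochner_integral_mult_right)
  then show ?thesis by (simp add: eq C_def)
qed

lemma integrable_gaussian_bound:
  fixes g :: "real \<Rightarrow> real"
  assumes "g \<in> borel_measurable borel" and "0 < b"
    and "\<And>x. \<bar>g x\<bar> \<le> C * exp (a * x - b * x\<^sup>2 / 2)"
  shows "integrable lborel g"
proof (rule Bochner_Integration.integrable_bound)
  show "integrable lborel (\<lambda>x. C * exp (a * x - b * x\<^sup>2 / 2))"
    using has_bochner_integral_gaussian[OF \<open>0 < b\<close>, of a] by (simp add: has_bochner_integral_iff)
  show "AE x in lborel. norm (g x) \<le> norm (C * exp (a * x - b * x\<^sup>2 / 2))"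
    using assms(3) by (auto intro: order_trans[OF _ abs_ge_self])
qed (use assms in simp)

lemma has_bochner_integral_std_normal_exp:
  "has_bochner_integral lborel (\<lambda>z. std_normal_density z * exp (c * z)) (exp (c\<^sup>2 / 2))"
proof -
  have "has_bochner_integral lborel (\<lambda>z. 1 / sqrt (2 * pi) * exp (c * z - 1 * z\<^sup>2 / 2))
      (1 / sqrt (2 * pi) * (sqrt (2 * pi / 1) * exp (c\<^sup>2 / (2 * 1))))"
    by (intro has_bochner_integral_mult_right has_bochner_integral_gaussian) simp
  moreover have "1 / sqrt (2 * pi) * exp (c * z - 1 * z\<^sup>2 / 2) = std_normal_density z * exp (c * z)"
    for z
  proof -
    have "exp (c * z - 1 * z\<^sup>2 / 2) = exp (- z\<^sup>2 / 2) * exp (c * z)"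
      by (rule trans[OF _ exp_add]) simp
    then show ?thesis by (simp only: std_normal_density_def mult.assoc)
  qed
  ultimately show ?thesis by simp
qed

lemma integrable_std_normal_mult_bounded:
  fixes f :: "real \<Rightarrow> real"
  assumes "f \<in> borel_measurable borel" and "\<And>x. \<bar>f x\<bar> \<le> C"
  shows "integrable lborel (\<lambda>z. std_normal_density z * f z)"
proof (rule Bochner_Integration.integrable_bound
    [OF integrable_mult_right[OF integrable_normal_density[of 1 0], of C]])
  have "\<bar>f z\<bar> \<le> \<bar>C\<bar>" for z
    using assms(2)[of z] by linarith
  then show "AE z in lborel. norm (std_normal_density z * f z) \<le> norm (C * std_normal_density z)"
    by (auto intro!: AE_I2 mult_right_mono simp: abs_mult mult.commute)
  show "(\<lambda>z. std_normal_density z * f z) \<in> borel_measurable lborel"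
    using assms(1) by measurable
qed simp

lemma DERIV_std_normal_density:
  "(std_normal_density has_real_derivative - z * std_normal_density z) (at z)"
  unfolding std_normal_density_def[abs_def]
  by (auto intro!: derivative_eq_intros simp: field_simps)

lemma std_normal_density_at_top: "(std_normal_density \<longlongrightarrow> 0) at_top"
  unfolding std_normal_density_def[abs_def] by real_asymp

lemma std_normal_density_at_bot: "(std_normal_density \<longlongrightarrow> 0) at_bot"
  unfolding std_normal_density_def[abs_def] by real_asymp

lemma sqrt_2_div_pi_le: "sqrt (2 / pi) \<le> 4 / 5"
proof -
  have "2 / pi \<le> (4 / 5)\<^sup>2"
    using pi_approx(1) by (simp add: divide_le_eq power2_eq_square)
  from real_sqrt_le_mono[OF this] show ?thesis by simp
qed

lemma min_at_zero_of_deriv_sign: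
  fixes h h' :: "real \<Rightarrow> real"
  assumes deriv: "\<And>t. (h has_real_derivative h' t) (at t)"
    and pos: "\<And>t. 0 < t \<Longrightarrow> 0 \<le> h' t" and neg: "\<And>t. t < 0 \<Longrightarrow> h' t \<le> 0"
  shows "h 0 \<le> h x"
proof (cases x "0::real" rule: linorder_cases)
  case less
  from MVT2[OF less deriv] obtain z where z: "x < z" "z < 0" "h 0 - h x = (0 - x) * h' z"
    by blast
  have "(0 - x) * h' z \<le> 0" using z less neg[of z] by (intro mult_nonneg_nonpos) auto
  then show ?thesis using z by linarith
next
  case greater
  from MVT2[OF greater deriv] obtain z where z: "0 < z" "z < x" "h x - h 0 = (x - 0) * h' z"
    by blast
  have "(x - 0) * h' z \<ge> 0" using z greater pos[of z] by simp
  then show ?thesis using z by linarith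
qed simp

lemma le_quadratic_of_deriv_decrease:
  fixes f f' :: "real \<Rightarrow> real"
  assumes deriv: "\<And>x. (f has_real_derivative f' x) (at x)"
    and decrease: "\<And>x y. x < y \<Longrightarrow> f' y - f' x \<le> - c * (y - x)"
  shows "f x \<le> f 0 + f' 0 * x - c * x\<^sup>2 / 2"
proof -
  define h where "h t = f 0 + f' 0 * t - c * t\<^sup>2 / 2 - f t" for t
  have "(h has_real_derivative f' 0 - c * t - f' t) (at t)" for t
    unfolding h_def by (auto intro!: derivative_eq_intros deriv)
  then have "h 0 \<le> h x"
  proof (rule min_at_zero_of_deriv_sign)
    fix t :: real
    show "0 < t \<Longrightarrow> 0 \<le> f' 0 - c * t - f' t" using decrease[of 0 t] by simp
    show "t < 0 \<Longrightarrow> f' 0 - c * t - f' t \<le> 0" using decrease[of t 0] by simp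
  qed
  then show ?thesis unfolding h_def by simp
qed

lemma DERIV_interval_integral_from_0:
  fixes f :: "real \<Rightarrow> real"
  assumes "continuous_on UNIV f"
  shows "((\<lambda>u. LBINT x=ereal 0..u. f x) has_real_derivative f y) (at y)"
proof -
  define a where "a = min 0 y - 1"
  define b where "b = max 0 y + 1"
  have "((\<lambda>u. LBINT x=ereal 0..u. f x) has_vector_derivative f y) (at y within {a..b})"
    by (rule interval_integral_FTC2)
       (auto simp: a_def b_def intro: continuous_on_subset[OF assms])
  then have "((\<lambda>u. LBINT x=ereal 0..u. f x) has_vector_derivative f y) (at y within {a<..<b})"
    by (rule has_vector_derivative_within_subset) auto
  then show ?thesis
    by (subst (asm) has_vector_derivative_within_open)
       (auto simp: a_def b_def has_real_derivative_iff_has_vector_derivative)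
qed

lemma integral_Iic_eq:
  fixes f :: "real \<Rightarrow> real"
  assumes int: "integrable lborel f"
  shows "(LINT x|lborel. indicator {..y} x * f x)
       = (LINT x|lborel. indicator {..0} x * f x) + (LBINT x=ereal 0..y. f x)"
proof (cases "0 \<le> y")
  case True
  have "(LBINT x=ereal 0..y. f x) = (LINT x|lborel. indicator {0<..y} x * f x)"
    using True by (simp add: interval_integral_Ioc set_lebesgue_integral_def)
  moreover have "(LINT x|lborel. indicator {..y} x * f x)
      = (LINT x|lborel. indicator {..0} x * f x + indicator {0<..y} x * f x)"
    using True by (intro Bochner_Integration.integral_cong) (auto split: split_indicator)
  moreover have "\<dots> = (LINT x|lborel. indicator {..0} x * f x)
                      + (LINT x|lborel. indicator {0<..y} x * f x)"
    by (intro Bochner_Integration.integral_add)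
       (auto intro!: integrable_mult_indicator[where 'b=real, simplified] int)
  ultimately show ?thesis by simp
next
  case False
  have "(LBINT x=ereal 0..y. f x) = - (LINT x|lborel. indicator {y<..0} x * f x)"
    using False
    by (simp add: interval_integral_endpoints_reverse[of "ereal 0" y] interval_integral_Ioc
        set_lebesgue_integral_def)
  moreover have "(LINT x|lborel. indicator {..0} x * f x)
      = (LINT x|lborel. indicator {..y} x * f x + indicator {y<..0} x * f x)"
    using False by (intro Bochner_Integration.integral_cong) (auto split: split_indicator)
  moreover have "\<dots> = (LINT x|lborel. indicator {..y} x * f x)
                      + (LINT x|lborel. indicator {y<..0} x * f x)"
    by (intro Bochner_Integration.integral_add)
       (auto intro!: integrable_mult_indicator[where 'b=real, simplified] int)
  ultimately show ?thesis by simp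
qed

lemma DERIV_integral_Iic:
  fixes f :: "real \<Rightarrow> real"
  assumes "integrable lborel f" and "continuous_on UNIV f"
  shows "((\<lambda>y. LINT x|lborel. indicator {..y} x * f x) has_real_derivative f y) (at y)"
proof -
  have "((\<lambda>u. (LINT x|lborel. indicator {..0} x * f x) + (LBINT x=ereal 0..u. f x))
          has_real_derivative 0 + f y) (at y)"
    by (intro DERIV_add DERIV_const DERIV_interval_integral_from_0 assms)
  moreover have "(\<lambda>y. LINT x|lborel. indicator {..y} x * f x)
      = (\<lambda>u. (LINT x|lborel. indicator {..0} x * f x) + (LBINT x=ereal 0..u. f x))"
    using integral_Iic_eq[OF assms(1)] by (rule ext)
  ultimately show ?thesis by simp
qed

lemma DERIV_integral_Ioi:
  fixes f :: "real \<Rightarrow> real"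
  assumes int: "integrable lborel f" and "continuous_on UNIV f"
  shows "((\<lambda>y. LINT x|lborel. indicator {y<..} x * f x) has_real_derivative - f y) (at y)"
proof -
  have eq: "(LINT x|lborel. indicator {y<..} x * f x)
      = (LINT x|lborel. f x) - (LINT x|lborel. indicator {..y} x * f x)" for y
  proof -
    have "(LINT x|lborel. indicator {y<..} x * f x)
        = (LINT x|lborel. f x - indicator {..y} x * f x)"
      by (intro Bochner_Integration.integral_cong) (auto split: split_indicator)
    also have "\<dots> = (LINT x|lborel. f x) - (LINT x|lborel. indicator {..y} x * f x)"
      by (intro Bochner_Integration.integral_diff)
         (auto intro!: integrable_mult_indicator[where 'b=real, simplified] int)
    finally show ?thesis .
  qed
  have "((\<lambda>y. (LINT x|lborel. f x) - (LINT x|lborel. indicator {..y} x * f x))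
          has_real_derivative 0 - f y) (at y)"
    by (intro DERIV_diff DERIV_const DERIV_integral_Iic assms)
  then show ?thesis by (simp add: eq)
qed

subsection \<open>Gaussian smoothing\<close>

lemma DERIV_integral_dominated:
  fixes f :: "real \<Rightarrow> real \<Rightarrow> real"
  assumes integrable: "\<And>t. integrable lborel (f t)"
    and deriv: "\<And>z. ((\<lambda>t. f t z) has_real_derivative f' z) (at s)"
    and f'_measurable: "f' \<in> borel_measurable borel"
    and dominated: "\<And>h z. \<bar>(f (s + h) z - f s z) / h\<bar> \<le> w z"
    and w_integrable: "integrable lborel w"
  shows "((\<lambda>t. LINT z|lborel. f t z) has_real_derivative (LINT z|lborel. f' z)) (at s)"
proof -
  have [measurable]: "f t \<in> borel_measurable lborel" for t
    using integrable by (rule borel_measurable_integrable)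
  define q where "q h z = (f (s + h) z - f s z) / h" for h z
  have quotient: "((LINT z|lborel. f (s + h) z) - (LINT z|lborel. f s z)) / h
      = (LINT z|lborel. q h z)" for h
    unfolding q_def using integrable by simp
  have "((\<lambda>h. ((LINT z|lborel. f (s + h) z) - (LINT z|lborel. f s z)) / h)
          \<longlongrightarrow> (LINT z|lborel. f' z)) (at 0)"
  proof (subst LIMSEQ_SEQ_conv[symmetric], intro allI impI)
    fix S :: "nat \<Rightarrow> real" assume S: "(\<forall>n. S n \<noteq> 0) \<and> S \<longlonglongrightarrow> 0"
    have "(\<lambda>n. LINT z|lborel. q (S n) z) \<longlonglongrightarrow> (LINT z|lborel. f' z)"
    proof (rule integral_dominated_convergence[where w=w])
      show "AE z in lborel. (\<lambda>n. q (S n) z) \<longlonglongrightarrow> f' z"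
        using deriv S unfolding DERIV_def LIMSEQ_SEQ_conv[symmetric] q_def by blast
      show "AE z in lborel. norm (q (S n) z) \<le> w z" for n
        using dominated by (simp add: q_def)
    qed (simp_all add: q_def f'_measurable w_integrable)
    then show "(\<lambda>n. ((LINT z|lborel. f (s + S n) z) - (LINT z|lborel. f s z)) / S n)
                 \<longlonglongrightarrow> (LINT z|lborel. f' z)"
      by (simp add: quotient)
  qed
  then show ?thesis unfolding DERIV_def .
qed

lemma DERIV_std_normal_smoothing:
  fixes F G :: "real \<Rightarrow> real"
  assumes F_deriv: "\<And>x. (F has_real_derivative G x) (at x)"
    and G_measurable [measurable]: "G \<in> borel_measurable borel"
    and F_bound: "\<And>x. \<bar>F x\<bar> \<le> C" and G_bound: "\<And>x. \<bar>G x\<bar> \<le> K"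
  shows "((\<lambda>s. LINT z|lborel. std_normal_density z * F (s * z)) has_real_derivative
           (LINT z|lborel. std_normal_density z * (z * G (s * z)))) (at s)"
proof (rule DERIV_integral_dominated[where w="\<lambda>z. K * (std_normal_density z * \<bar>z\<bar> ^ 1)"])
  have F_measurable [measurable]: "F \<in> borel_measurable borel"
    by (rule borel_measurable_continuous_onI[OF has_real_derivative_imp_continuous_on[OF F_deriv]])
  show "integrable lborel (\<lambda>z. std_normal_density z * F (t * z))" for t
    by (rule integrable_std_normal_mult_bounded[OF _ F_bound]) measurable
  show "(\<lambda>z. std_normal_density z * (z * G (s * z))) \<in> borel_measurable borel"
    by measurable
  show "((\<lambda>t. std_normal_density z * F (t * z)) has_real_derivative
          std_normal_density z * (z * G (s * z))) (at s)" for z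
  proof -
    have "((\<lambda>t. F (t * z)) has_real_derivative G (s * z) * z) (at s)"
      by (rule DERIV_chain2[OF F_deriv]) (auto intro!: derivative_eq_intros)
    from DERIV_cmult[OF this, of "std_normal_density z"] show ?thesis
      by (simp add: ac_simps)
  qed
  show "integrable lborel (\<lambda>z. K * (std_normal_density z * \<bar>z\<bar> ^ 1))"
    by (intro integrable_mult_right integrable_std_normal_moment_abs)
  show "\<bar>(std_normal_density z * F ((s + h) * z) - std_normal_density z * F (s * z)) / h\<bar>
          \<le> K * (std_normal_density z * \<bar>z\<bar> ^ 1)" for h z
  proof (cases "h = 0")
    case False
    have "\<bar>F ((s + h) * z) - F (s * z)\<bar> \<le> K * \<bar>(s + h) * z - s * z\<bar>"
      using field_differentiable_bound[of UNIV F G K] F_deriv G_bound by auto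
    then have "\<bar>(F ((s + h) * z) - F (s * z)) / h\<bar> \<le> K * \<bar>z\<bar>"
      using False by (simp add: abs_divide divide_le_eq algebra_simps abs_mult)
    then have "std_normal_density z * \<bar>(F ((s + h) * z) - F (s * z)) / h\<bar>
        \<le> std_normal_density z * (K * \<bar>z\<bar>)"
      by (rule mult_left_mono) simp
    then show ?thesis
      by (simp only: right_diff_distrib[symmetric] times_divide_eq_right[symmetric] abs_mult
          abs_of_nonneg[OF normal_density_nonneg] power_one_right mult.left_commute)
  qed (use G_bound[of 0] in simp)
qed

lemma integral_deriv_eq_0_of_vanishing:
  fixes H H' :: "real \<Rightarrow> real"
  assumes deriv: "\<And>x. (H has_real_derivative H' x) (at x)"
    and continuous: "continuous_on UNIV H'" and integrable: "integrable lborel H'"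
    and at_bot: "(H \<longlongrightarrow> 0) at_bot" and at_top: "(H \<longlongrightarrow> 0) at_top"
  shows "(LINT x|lborel. H' x) = 0"
proof -
  have "(LBINT x=-\<infinity>..\<infinity>. H' x) = 0 - 0"
  proof (rule interval_integral_FTC_integrable)
    show "((H \<circ> real_of_ereal) \<longlongrightarrow> 0) (at_right (- \<infinity>))"
      using at_bot by (simp add: ereal_tendsto_simps1)
    show "((H \<circ> real_of_ereal) \<longlongrightarrow> 0) (at_left \<infinity>)"
      using at_top by (simp add: ereal_tendsto_simps1)
    show "set_integrable lborel (einterval (- \<infinity>) \<infinity>) H'"
      using integrable by (simp add: set_integrable_def)
  qed (use continuous in \<open>auto simp: deriv[THEN has_real_derivative_iff_has_vector_derivative[THEN iffD1]]
         continuous_on_eq_continuous_at\<close>)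
  then show ?thesis
    by (simp add: interval_lebesgue_integral_def set_lebesgue_integral_def)
qed

lemma std_normal_stein_identity:
  fixes h h' :: "real \<Rightarrow> real"
  assumes h_deriv: "\<And>x. (h has_real_derivative h' x) (at x)"
    and h_bound: "\<And>x. \<bar>h x\<bar> \<le> C" and h'_continuous: "continuous_on UNIV h'"
    and h'_integrable: "integrable lborel (\<lambda>z. std_normal_density z * h' z)"
  shows "(LINT z|lborel. std_normal_density z * (z * h z))
       = (LINT z|lborel. std_normal_density z * h' z)"
proof -
  have h_continuous: "continuous_on UNIV h" by (rule has_real_derivative_imp_continuous_on[OF h_deriv])
  have [measurable]: "h \<in> borel_measurable borel"
    by (rule borel_measurable_continuous_onI[OF h_continuous])
  define H where "H z = std_normal_density z * h z" for z
  define H' where "H' z = std_normal_density z * h' z - std_normal_density z * (z * h z)" for z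
  have moment_integrable: "integrable lborel (\<lambda>z. std_normal_density z * (z * h z))"
  proof (rule Bochner_Integration.integrable_bound
      [OF integrable_mult_right[OF integrable_std_normal_moment_abs[of 1], of C]])
    have "std_normal_density z * \<bar>z\<bar> * \<bar>h z\<bar> \<le> std_normal_density z * \<bar>z\<bar> * \<bar>C\<bar>" for z
      by (rule mult_left_mono[OF order_trans[OF h_bound abs_ge_self]]) simp
    then show "AE z in lborel. norm (std_normal_density z * (z * h z))
                           \<le> norm (C * (std_normal_density z * \<bar>z\<bar> ^ 1))"
      by (auto intro!: AE_I2 simp: abs_mult ac_simps)
  qed measurable
  have H_bound: "\<bar>H z\<bar> \<le> C * std_normal_density z" for z
    unfolding H_def using h_bound[of z] by (simp add: abs_mult mult_right_mono mult.commute)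
  have "(LINT z|lborel. H' z) = 0"
  proof (rule integral_deriv_eq_0_of_vanishing[where H=H])
    show "(H has_real_derivative H' z) (at z)" for z
      using DERIV_mult[OF DERIV_std_normal_density h_deriv] unfolding H_def[abs_def] H'_def
      by (simp add: algebra_simps)
    show "continuous_on UNIV H'" unfolding H'_def[abs_def] std_normal_density_def
      by (intro continuous_intros h_continuous h'_continuous) auto
    show "integrable lborel H'"
      unfolding H'_def[abs_def] using h'_integrable moment_integrable by simp
    show "(H \<longlongrightarrow> 0) at_bot"
      by (rule Lim_null_comparison[OF _ tendsto_mult_right_zero[OF std_normal_density_at_bot]])
         (use H_bound in \<open>auto intro: always_eventually\<close>)
    show "(H \<longlongrightarrow> 0) at_top"
      by (rule Lim_null_comparison[OF _ tendsto_mult_right_zero[OF std_normal_density_at_top]])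
         (use H_bound in \<open>auto intro: always_eventually\<close>)
  qed
  then show ?thesis
    unfolding H'_def using h'_integrable moment_integrable by simp
qed

subsection \<open>The Laplace smoothing of a density\<close>

definition laplace_conv :: "(real \<Rightarrow> real) \<Rightarrow> real \<Rightarrow> real" where
  "laplace_conv p y = (LINT x|lborel. p x * exp (- \<bar>x - y\<bar>))"

definition laplace_left :: "(real \<Rightarrow> real) \<Rightarrow> real \<Rightarrow> real" where
  "laplace_left p y = exp (- y) * (LINT x|lborel. indicator {..y} x * (p x * exp x))"

definition laplace_right :: "(real \<Rightarrow> real) \<Rightarrow> real \<Rightarrow> real" where
  "laplace_right p y = exp y * (LINT x|lborel. indicator {y<..} x * (p x * exp (- x)))"

definition laplace_conv_deriv :: "(real \<Rightarrow> real) \<Rightarrow> real \<Rightarrow> real" where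
  "laplace_conv_deriv p y = laplace_right p y - laplace_left p y"

lemma lexp_le_1: "lexp t \<le> 1"
  unfolding lexp_def by simp

lemma lexp_pos: "0 < lexp t"
  unfolding lexp_def by simp

lemma lexp_measurable [measurable]: "lexp \<in> borel_measurable borel"
  unfolding lexp_def[abs_def] by measurable

lemma integrable_gsig_integrand:
  "integrable lborel (\<lambda>z. std_normal_density z * lexp (m + s * z))"
  by (rule integrable_std_normal_mult_bounded[where C=1])
     (auto simp: abs_of_pos[OF lexp_pos] lexp_le_1)

lemma gsig_le_1: "gsig s m \<le> 1"
proof -
  have "gsig s m \<le> (LINT z|lborel. std_normal_density z)"
    unfolding gsig_def
    by (intro integral_mono integrable_gsig_integrand) (auto intro!: mult_left_le lexp_le_1)
  then show ?thesis by simp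
qed

lemma gsig_nonneg: "0 \<le> gsig s m"
  unfolding gsig_def
  by (intro integral_nonneg_AE AE_I2) (auto intro!: mult_nonneg_nonneg less_imp_le[OF lexp_pos])

locale exp_moment_density =
  fixes p :: "real \<Rightarrow> real"
  assumes p_nonneg: "\<And>x. 0 \<le> p x" and p_continuous: "continuous_on UNIV p"
    and integral_p: "(LINT x|lborel. p x) = 1"
    and integrable_p_exp: "integrable lborel (\<lambda>x. p x * exp x)"
    and integrable_p_exp_neg: "integrable lborel (\<lambda>x. p x * exp (- x))"
begin

lemma p_measurable [measurable]: "p \<in> borel_measurable borel"
  by (rule borel_measurable_continuous_onI[OF p_continuous])

text \<open>A non-integrable function has Bochner integral \<open>0\<close>, so \<open>integral_p\<close> implies integrability.\<close>
lemma integrable_p: "integrable lborel p"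
  using not_integrable_integral_eq integral_p by fastforce

lemma DERIV_laplace_left: "(laplace_left p has_real_derivative p y - laplace_left p y) (at y)"
proof -
  have "((\<lambda>y. exp (- y)) has_real_derivative - exp (- y)) (at y)"
    by (auto intro!: derivative_eq_intros)
  moreover have "((\<lambda>y. LINT x|lborel. indicator {..y} x * (p x * exp x))
          has_real_derivative p y * exp y) (at y)"
    by (intro DERIV_integral_Iic integrable_p_exp continuous_intros p_continuous)
  ultimately have "((\<lambda>y. exp (- y) * (LINT x|lborel. indicator {..y} x * (p x * exp x)))
      has_real_derivative - exp (- y) * (LINT x|lborel. indicator {..y} x * (p x * exp x))
                          + p y * exp y * exp (- y)) (at y)"
    by (rule DERIV_mult)
  moreover have "p y * exp y * exp (- y) = p y"
    by (simp add: exp_minus)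
  ultimately show ?thesis
    unfolding laplace_left_def[abs_def] by simp
qed

lemma DERIV_laplace_right: "(laplace_right p has_real_derivative laplace_right p y - p y) (at y)"
proof -
  have "((\<lambda>y. LINT x|lborel. indicator {y<..} x * (p x * exp (- x)))
          has_real_derivative - (p y * exp (- y))) (at y)"
    by (intro DERIV_integral_Ioi integrable_p_exp_neg continuous_intros p_continuous)
  from DERIV_mult[OF DERIV_exp this]
  have "((\<lambda>y. exp y * (LINT x|lborel. indicator {y<..} x * (p x * exp (- x))))
      has_real_derivative exp y * (LINT x|lborel. indicator {y<..} x * (p x * exp (- x)))
                          - p y * exp (- y) * exp y) (at y)"
    by simp
  moreover have "p y * exp (- y) * exp y = p y"
    by (simp add: exp_minus)
  ultimately show ?thesis
    unfolding laplace_right_def[abs_def] by simp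
qed

lemma laplace_left_nonneg: "0 \<le> laplace_left p y"
  unfolding laplace_left_def
  by (intro mult_nonneg_nonneg integral_nonneg_AE AE_I2) (auto simp: p_nonneg)

lemma laplace_right_nonneg: "0 \<le> laplace_right p y"
  unfolding laplace_right_def
  by (intro mult_nonneg_nonneg integral_nonneg_AE AE_I2) (auto simp: p_nonneg)

lemma laplace_conv_eq_left_right: "laplace_conv p y = laplace_left p y + laplace_right p y"
proof -
  have "laplace_left p y + laplace_right p y
      = (LINT x|lborel. exp (- y) * (indicator {..y} x * (p x * exp x)))
        + (LINT x|lborel. exp y * (indicator {y<..} x * (p x * exp (- x))))"
    unfolding laplace_left_def laplace_right_def by simp
  also have "\<dots> = (LINT x|lborel. exp (- y) * (indicator {..y} x * (p x * exp x))
                               + exp y * (indicator {y<..} x * (p x * exp (- x))))"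
    by (intro Bochner_Integration.integral_add[symmetric] integrable_mult_right
        integrable_mult_indicator[where 'b=real, simplified]
        integrable_p_exp integrable_p_exp_neg) auto
  also have "\<dots> = laplace_conv p y"
    unfolding laplace_conv_def
  proof (intro Bochner_Integration.integral_cong refl)
    fix x
    show "exp (- y) * (indicator {..y} x * (p x * exp x))
          + exp y * (indicator {y<..} x * (p x * exp (- x))) = p x * exp (- \<bar>x - y\<bar>)"
      by (cases "x \<le> y") (auto simp: abs_if exp_diff exp_minus field_simps)
  qed
  finally show ?thesis by (rule sym)
qed

lemma DERIV_laplace_conv: "(laplace_conv p has_real_derivative laplace_conv_deriv p y) (at y)"
  using DERIV_add[OF DERIV_laplace_left DERIV_laplace_right]
  by (simp add: laplace_conv_eq_left_right[abs_def] laplace_conv_deriv_def)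

lemma DERIV_laplace_conv_deriv:
  "(laplace_conv_deriv p has_real_derivative laplace_conv p y - 2 * p y) (at y)"
  using DERIV_diff[OF DERIV_laplace_right DERIV_laplace_left]
  by (simp add: laplace_conv_deriv_def[abs_def] laplace_conv_eq_left_right ac_simps)

lemma integrable_laplace_conv_integrand:
  "integrable lborel (\<lambda>x. p x * exp (- \<bar>x - y\<bar>))"
  by (rule Bochner_Integration.integrable_bound[OF integrable_p])
     (auto simp: abs_mult p_nonneg intro!: AE_I2 mult_left_le)

lemma laplace_conv_le_1: "laplace_conv p y \<le> 1"
proof -
  have "laplace_conv p y \<le> (LINT x|lborel. p x)"
    unfolding laplace_conv_def
    by (intro integral_mono integrable_laplace_conv_integrand integrable_p)
       (auto simp: p_nonneg intro!: mult_left_le)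
  then show ?thesis using integral_p by simp
qed

lemma laplace_conv_nonneg: "0 \<le> laplace_conv p y"
  using laplace_left_nonneg laplace_right_nonneg by (simp add: laplace_conv_eq_left_right)

lemma abs_laplace_conv_deriv_le_1: "\<bar>laplace_conv_deriv p y\<bar> \<le> 1"
  using laplace_left_nonneg[of y] laplace_right_nonneg[of y] laplace_conv_le_1[of y]
  unfolding laplace_conv_deriv_def laplace_conv_eq_left_right by linarith

lemma continuous_laplace_conv: "continuous_on UNIV (laplace_conv p)"
  by (rule has_real_derivative_imp_continuous_on[OF DERIV_laplace_conv])

lemma laplace_conv_measurable [measurable]: "laplace_conv p \<in> borel_measurable borel"
  by (rule borel_measurable_continuous_onI[OF continuous_laplace_conv])

lemma laplace_conv_deriv_measurable [measurable]:
  "laplace_conv_deriv p \<in> borel_measurable borel"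
  by (rule borel_measurable_continuous_onI[OF has_real_derivative_imp_continuous_on[OF DERIV_laplace_conv_deriv]])

lemma laplace_conv_ge_shift: "exp (- \<bar>y\<bar>) * laplace_conv p 0 \<le> laplace_conv p y"
proof -
  have "exp (- \<bar>y\<bar>) * laplace_conv p 0 = (LINT x|lborel. exp (- \<bar>y\<bar>) * (p x * exp (- \<bar>x\<bar>)))"
    by (simp add: laplace_conv_def)
  also have "\<dots> \<le> laplace_conv p y"
    unfolding laplace_conv_def
  proof (rule integral_mono)
    show "integrable lborel (\<lambda>x. exp (- \<bar>y\<bar>) * (p x * exp (- \<bar>x\<bar>)))"
      using integrable_laplace_conv_integrand[of 0] by simp
    fix x
    have "exp (- \<bar>y\<bar>) * exp (- \<bar>x\<bar>) \<le> exp (- \<bar>x - y\<bar>)"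
      by (simp add: exp_add[symmetric])
    then show "exp (- \<bar>y\<bar>) * (p x * exp (- \<bar>x\<bar>)) \<le> p x * exp (- \<bar>x - y\<bar>)"
      using p_nonneg[of x] by (simp add: ac_simps mult_left_mono)
  qed (rule integrable_laplace_conv_integrand)
  finally show ?thesis .
qed

lemma Lsig_eq_smoothed_laplace_conv:
  "Lsig p s = (LINT z|lborel. std_normal_density z * laplace_conv p (s * z))"
proof -
  define f where "f m z = p m * (std_normal_density z * lexp (m + s * z))" for m z
  have f_measurable [measurable]: "(\<lambda>(m, z). f m z) \<in> borel_measurable (lborel \<Otimes>\<^sub>M lborel)"
    unfolding f_def by measurable
  have inner: "(LINT z|lborel. \<bar>f m z\<bar>) = p m * gsig s m" for m
    unfolding f_def gsig_def by (simp add: abs_mult abs_of_pos[OF lexp_pos] p_nonneg)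
  have integrable: "integrable (lborel \<Otimes>\<^sub>M lborel) (\<lambda>(m, z). f m z)"
  proof (rule lborel_pair.Fubini_integrable)
    show "integrable lborel (\<lambda>m. LINT z|lborel. norm (case (m, z) of (m, z) \<Rightarrow> f m z))"
    proof (rule Bochner_Integration.integrable_bound[OF integrable_p])
      show "AE m in lborel. norm (LINT z|lborel. norm (case (m, z) of (m, z) \<Rightarrow> f m z))
                             \<le> norm (p m)"
        using p_nonneg gsig_le_1 gsig_nonneg
        by (auto intro!: AE_I2 mult_left_le simp: inner abs_mult)
    qed (use f_measurable in measurable)
    show "AE m in lborel. integrable lborel (\<lambda>z. case (m, z) of (m, z) \<Rightarrow> f m z)"
      unfolding f_def by (auto intro!: AE_I2 integrable_gsig_integrand)
  qed (rule f_measurable)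
  have "Lsig p s = (LINT m|lborel. LINT z|lborel. f m z)"
    unfolding Lsig_def gsig_def f_def by simp
  also have "\<dots> = (LINT z|lborel. LINT m|lborel. f m z)"
    by (rule lborel_pair.Fubini_integral[symmetric]) (use integrable in simp)
  also have "\<dots> = (LINT z|lborel. std_normal_density z * laplace_conv p (- s * z))"
  proof (intro Bochner_Integration.integral_cong refl)
    fix z
    have "(LINT m|lborel. f m z)
        = (LINT m|lborel. std_normal_density z * (p m * exp (- \<bar>m - (- s * z)\<bar>)))"
      unfolding f_def lexp_def by (intro Bochner_Integration.integral_cong) (auto simp: ac_simps)
    then show "(LINT m|lborel. f m z) = std_normal_density z * laplace_conv p (- s * z)"
      by (simp add: laplace_conv_def)
  qed
  also have "\<dots> = (LINT z|lborel. std_normal_density z * laplace_conv p (s * z))"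
    using lborel_integral_real_affine[where c="-1" and t=0
        and f="\<lambda>z. std_normal_density z * laplace_conv p (s * z)"]
    by (simp add: std_normal_density_def)
  finally show ?thesis .
qed

lemma Lsig_ge_laplace_conv_0:
  assumes s: "0 < s" "s \<le> 1"
  shows "laplace_conv p 0 / 5 \<le> Lsig p s"
proof -
  let ?F0 = "laplace_conv p 0"
  have moment: "integrable lborel (\<lambda>z. std_normal_density z * \<bar>z\<bar> ^ 1)"
    by (rule integrable_std_normal_moment_abs)
  have "?F0 * (1 - s * sqrt (2 / pi))
      = (LINT z|lborel. ?F0 * (std_normal_density z - s * (std_normal_density z * \<bar>z\<bar> ^ 1)))"
    using moment integral_std_normal_moment_abs_odd[of 0]
    by (simp add: Bochner_Integration.integral_diff right_diff_distrib)
  also have "\<dots> \<le> (LINT z|lborel. std_normal_density z * laplace_conv p (s * z))"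
  proof (rule integral_mono)
    show "integrable lborel (\<lambda>z. ?F0 * (std_normal_density z - s * (std_normal_density z * \<bar>z\<bar> ^ 1)))"
      using moment by (intro integrable_mult_right Bochner_Integration.integrable_diff) auto
    show "integrable lborel (\<lambda>z. std_normal_density z * laplace_conv p (s * z))"
      by (rule integrable_std_normal_mult_bounded[where C=1])
         (auto simp: laplace_conv_le_1 abs_of_nonneg[OF laplace_conv_nonneg])
    fix z
    have "1 - s * \<bar>z\<bar> \<le> exp (- \<bar>s * z\<bar>)"
      using exp_ge_add_one_self[of "- \<bar>s * z\<bar>"] s by (simp add: abs_mult)
    then have "?F0 * (1 - s * \<bar>z\<bar>) \<le> laplace_conv p (s * z)"
      using laplace_conv_ge_shift[of "s * z"] laplace_conv_nonneg[of 0]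
      by (metis mult.commute mult_left_mono order_trans)
    then have "std_normal_density z * (?F0 * (1 - s * \<bar>z\<bar>))
        \<le> std_normal_density z * laplace_conv p (s * z)"
      by (simp add: mult_left_mono)
    then show "?F0 * (std_normal_density z - s * (std_normal_density z * \<bar>z\<bar> ^ 1))
        \<le> std_normal_density z * laplace_conv p (s * z)"
      by (simp add: algebra_simps)
  qed
  finally have "?F0 * (1 - s * sqrt (2 / pi)) \<le> Lsig p s"
    by (simp add: Lsig_eq_smoothed_laplace_conv)
  moreover have "s * sqrt (2 / pi) \<le> 1 * (4 / 5)"
    using s sqrt_2_div_pi_le by (intro mult_mono) auto
  then have "?F0 * (1 / 5) \<le> ?F0 * (1 - s * sqrt (2 / pi))"
    using laplace_conv_nonneg[of 0] by (intro mult_left_mono) auto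
  ultimately show ?thesis by simp
qed

end

subsection \<open>Strongly log-concave densities\<close>

lemma kappa_tilde_less:
  fixes \<rho> \<nu> d :: real
  assumes \<nu>: "0 < \<nu>" and \<rho>: "0 < \<rho>" and d: "d\<^sup>2 \<le> 4"
  shows "kappa_tilde \<rho> \<nu> < exp (- 1 / 2) / 5 * sqrt (\<nu> / (\<rho> + 1)) * exp (- (d\<^sup>2 / (2 * \<nu>)))"
proof -
  define E where "E = exp (- (d\<^sup>2 / (2 * \<nu>)))"
  define X where "X = sqrt (\<rho> + 1)"
  have X_pos: "0 < X" and sqrt_\<nu>_pos: "0 < sqrt \<nu>"
    using \<rho> \<nu> by (auto simp: X_def)
  have "exp (- (((sqrt \<rho> + 4) / (2 * sqrt \<nu>))\<^sup>2)) \<le> E"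
  proof -
    have "16 \<le> (sqrt \<rho> + 4)\<^sup>2"
      using \<rho> by (simp add: power2_eq_square algebra_simps)
    then have "d\<^sup>2 / (2 * \<nu>) \<le> (sqrt \<rho> + 4)\<^sup>2 / (4 * \<nu>)"
      using d \<nu> by (simp add: field_simps)
    moreover have "((sqrt \<rho> + 4) / (2 * sqrt \<nu>))\<^sup>2 = (sqrt \<rho> + 4)\<^sup>2 / (4 * \<nu>)"
      using \<nu> by (simp add: power_divide power_mult_distrib)
    ultimately show ?thesis unfolding E_def by simp
  qed
  then have kappa_le: "kappa_tilde \<rho> \<nu> \<le> sqrt \<nu> / (8 * sqrt (2 * pi) * (sqrt \<rho> + sqrt 2)) * E"
    unfolding kappa_tilde_def using \<nu> \<rho>
    by (intro order_trans[OF min.cobounded2] mult_left_mono) auto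
  have "2 * X \<le> sqrt (2 * pi) * (sqrt \<rho> + sqrt 2)"
  proof (rule mult_mono)
    show "2 \<le> sqrt (2 * pi)" using pi_ge_two by (simp add: real_le_rsqrt)
    have "\<rho> + 1 \<le> (sqrt \<rho> + sqrt 2)\<^sup>2"
      using \<rho> by (simp add: power2_eq_square algebra_simps)
    then show "X \<le> sqrt \<rho> + sqrt 2"
      unfolding X_def using \<rho> by (simp add: real_le_lsqrt)
  qed (use \<rho> in \<open>auto simp: X_def\<close>)
  then have "sqrt \<nu> / (8 * sqrt (2 * pi) * (sqrt \<rho> + sqrt 2)) \<le> sqrt \<nu> / (16 * X)"
    using X_pos sqrt_\<nu>_pos by (intro divide_left_mono) auto
  also have "\<dots> < 1 / 2 / 5 * (sqrt \<nu> / X)"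
    using X_pos sqrt_\<nu>_pos by (simp add: field_simps)
  also have "\<dots> \<le> exp (- 1 / 2) / 5 * (sqrt \<nu> / X)"
    using exp_ge_add_one_self[of "- 1 / 2 :: real"] X_pos sqrt_\<nu>_pos
    by (intro mult_right_mono divide_right_mono) auto
  finally have "kappa_tilde \<rho> \<nu> < exp (- 1 / 2) / 5 * (sqrt \<nu> / X) * E"
    using kappa_le by (smt (verit) E_def exp_gt_zero mult_strict_right_mono)
  then show ?thesis
    by (simp add: E_def X_def real_sqrt_divide)
qed

locale strongly_log_concave_density =
  fixes p dlogp :: "real \<Rightarrow> real" and \<rho> \<nu> :: real
  assumes nu_pos: "0 < \<nu>" and nu_le_rho: "\<nu> \<le> \<rho>"
    and p_pos: "\<And>x. 0 < p x"
    and p_one: "(LINT x|lborel. p x) = 1"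
    and dlogp: "\<And>x. ((\<lambda>t. ln (p t)) has_real_derivative dlogp x) (at x)"
    and strong_concave_smooth: "\<And>x y. x < y \<Longrightarrow>
          - \<rho> * (y - x) \<le> dlogp y - dlogp x \<and> dlogp y - dlogp x \<le> - \<nu> * (y - x)"
begin

abbreviation d :: real where "d \<equiv> dlogp 0"

lemma rho_pos: "0 < \<rho>"
  using nu_pos nu_le_rho by simp

lemma p_le_gaussian: "p x \<le> p 0 * exp (d * x - \<nu> * x\<^sup>2 / 2)"
proof -
  have "ln (p x) \<le> ln (p 0) + d * x - \<nu> * x\<^sup>2 / 2"
  proof (rule le_quadratic_of_deriv_decrease[where f="\<lambda>t. ln (p t)" and f'=dlogp and c=\<nu>])
    show "dlogp y - dlogp x \<le> - \<nu> * (y - x)" if "x < y" for x y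
      using strong_concave_smooth[OF that] by simp
  qed (rule dlogp)
  then have "exp (ln (p x)) \<le> exp (ln (p 0) + (d * x - \<nu> * x\<^sup>2 / 2))"
    by simp
  then show ?thesis using p_pos by (simp add: exp_add)
qed

lemma p_ge_gaussian: "p 0 * exp (d * x - \<rho> * x\<^sup>2 / 2) \<le> p x"
proof -
  have "- ln (p x) \<le> - ln (p 0) + - d * x - (- \<rho>) * x\<^sup>2 / 2"
  proof (rule le_quadratic_of_deriv_decrease
      [where f="\<lambda>t. - ln (p t)" and f'="\<lambda>t. - dlogp t" and c="- \<rho>"])
    show "((\<lambda>t. - ln (p t)) has_real_derivative - dlogp x) (at x)" for x
      by (rule DERIV_minus[OF dlogp])
    show "- dlogp y - - dlogp x \<le> - (- \<rho>) * (y - x)" if "x < y" for x y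
      using strong_concave_smooth[OF that] by simp
  qed
  then have "exp (ln (p 0) + (d * x - \<rho> * x\<^sup>2 / 2)) \<le> exp (ln (p x))"
    by simp
  then show ?thesis using p_pos by (simp add: exp_add)
qed

lemma p_bounded: "p x \<le> p 0 * exp (d\<^sup>2 / (2 * \<nu>))"
proof -
  have "d * x - \<nu> * x\<^sup>2 / 2 = d\<^sup>2 / (2 * \<nu>) - (\<nu> * x - d)\<^sup>2 / (2 * \<nu>)"
    using nu_pos by (simp add: field_simps power2_eq_square)
  also have "\<dots> \<le> d\<^sup>2 / (2 * \<nu>)"
    using nu_pos by simp
  finally show ?thesis
    using p_le_gaussian[of x] p_pos[of 0] by (smt (verit) exp_le_cancel_iff mult_left_mono)
qed

lemma integrable_p_exp_mult: "integrable lborel (\<lambda>x. p x * exp (c * x))"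
proof (rule integrable_gaussian_bound[OF _ nu_pos])
  have "continuous_on UNIV (\<lambda>t. exp (ln (p t)))"
    by (intro continuous_on_exp has_real_derivative_imp_continuous_on[OF dlogp])
  then have "p \<in> borel_measurable borel"
    using p_pos by (simp add: borel_measurable_continuous_onI)
  then show "(\<lambda>x. p x * exp (c * x)) \<in> borel_measurable borel"
    by (rule borel_measurable_times) (intro borel_measurable_continuous_onI continuous_intros)
  fix x
  have "\<bar>p x * exp (c * x)\<bar> \<le> p 0 * exp (d * x - \<nu> * x\<^sup>2 / 2) * exp (c * x)"
    using p_le_gaussian[of x] p_pos[of x] by simp
  also have "\<dots> = p 0 * exp ((d + c) * x - \<nu> * x\<^sup>2 / 2)"
    by (simp add: mult.assoc exp_add[symmetric] algebra_simps)
  finally show "\<bar>p x * exp (c * x)\<bar> \<le> p 0 * exp ((d + c) * x - \<nu> * x\<^sup>2 / 2)" .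
qed

sublocale exp_moment_density p
proof
  show "0 \<le> p x" for x
    using p_pos[of x] by simp
  have "continuous_on UNIV (\<lambda>t. exp (ln (p t)))"
    by (intro continuous_on_exp has_real_derivative_imp_continuous_on[OF dlogp])
  then show "continuous_on UNIV p"
    using p_pos by simp
  show "integrable lborel (\<lambda>x. p x * exp x)"
    using integrable_p_exp_mult[of 1] by simp
  show "integrable lborel (\<lambda>x. p x * exp (- x))"
    using integrable_p_exp_mult[of "- 1"] by simp
qed (rule p_one)

lemma gaussian_mass_le_1: "p 0 * (sqrt (2 * pi / \<rho>) * exp (d\<^sup>2 / (2 * \<rho>))) \<le> 1"
proof -
  have gaussian: "has_bochner_integral lborel (\<lambda>x. p 0 * exp (d * x - \<rho> * x\<^sup>2 / 2))
      (p 0 * (sqrt (2 * pi / \<rho>) * exp (d\<^sup>2 / (2 * \<rho>))))"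
    by (intro has_bochner_integral_mult_right has_bochner_integral_gaussian rho_pos)
  have "(LINT x|lborel. p 0 * exp (d * x - \<rho> * x\<^sup>2 / 2)) \<le> (LINT x|lborel. p x)"
    using integrable.intros[OF gaussian] integrable_p p_ge_gaussian
    by (intro integral_mono) auto
  then show ?thesis
    unfolding has_bochner_integral_integral_eq[OF gaussian] p_one .
qed

lemma gaussian_mass_ge_1: "1 \<le> p 0 * (sqrt (2 * pi / \<nu>) * exp (d\<^sup>2 / (2 * \<nu>)))"
proof -
  have gaussian: "has_bochner_integral lborel (\<lambda>x. p 0 * exp (d * x - \<nu> * x\<^sup>2 / 2))
      (p 0 * (sqrt (2 * pi / \<nu>) * exp (d\<^sup>2 / (2 * \<nu>))))"
    by (intro has_bochner_integral_mult_right has_bochner_integral_gaussian nu_pos)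
  have "(LINT x|lborel. p x) \<le> (LINT x|lborel. p 0 * exp (d * x - \<nu> * x\<^sup>2 / 2))"
    using integrable.intros[OF gaussian] integrable_p p_le_gaussian
    by (intro integral_mono) auto
  then show ?thesis
    unfolding has_bochner_integral_integral_eq[OF gaussian] p_one .
qed

lemma p_0_ge: "sqrt (\<nu> / (2 * pi)) * exp (- (d\<^sup>2 / (2 * \<nu>))) \<le> p 0"
proof -
  have sqrt_inverse: "sqrt (\<nu> / (2 * pi)) * sqrt (2 * pi / \<nu>) = 1"
    using nu_pos by (simp add: real_sqrt_mult[symmetric])
  have exp_inverse: "exp (- (d\<^sup>2 / (2 * \<nu>))) * exp (d\<^sup>2 / (2 * \<nu>)) = 1"
    by (simp add: exp_add[symmetric])
  have "sqrt (\<nu> / (2 * pi)) * exp (- (d\<^sup>2 / (2 * \<nu>))) * 1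
      \<le> sqrt (\<nu> / (2 * pi)) * exp (- (d\<^sup>2 / (2 * \<nu>)))
         * (p 0 * (sqrt (2 * pi / \<nu>) * exp (d\<^sup>2 / (2 * \<nu>))))"
    by (rule mult_left_mono[OF gaussian_mass_ge_1]) (use nu_pos in simp)
  also have "\<dots> = p 0 * (sqrt (\<nu> / (2 * pi)) * sqrt (2 * pi / \<nu>))
                     * (exp (- (d\<^sup>2 / (2 * \<nu>))) * exp (d\<^sup>2 / (2 * \<nu>)))"
    by (simp only: mult_ac)
  finally show ?thesis
    unfolding sqrt_inverse exp_inverse by simp
qed

text \<open>Uses \<open>|x| \<le> t/2 + x\<^sup>2/(2t)\<close> to dominate \<open>exp(-|x|)\<close> from below by a Gaussian.\<close>
lemma laplace_conv_0_ge:
  assumes t: "0 < t"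
  shows "p 0 * exp (- t / 2) * (sqrt (2 * pi / (\<rho> + 1 / t)) * exp (d\<^sup>2 / (2 * (\<rho> + 1 / t))))
           \<le> laplace_conv p 0"
proof -
  have gaussian: "has_bochner_integral lborel
      (\<lambda>x. p 0 * exp (- t / 2) * exp (d * x - (\<rho> + 1 / t) * x\<^sup>2 / 2))
      (p 0 * exp (- t / 2) * (sqrt (2 * pi / (\<rho> + 1 / t)) * exp (d\<^sup>2 / (2 * (\<rho> + 1 / t)))))"
    using t rho_pos by (intro has_bochner_integral_mult_right has_bochner_integral_gaussian add_pos_pos) auto
  have "(LINT x|lborel. p 0 * exp (- t / 2) * exp (d * x - (\<rho> + 1 / t) * x\<^sup>2 / 2))
      \<le> laplace_conv p 0"
    unfolding laplace_conv_def
  proof (rule integral_mono)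
    show "integrable lborel (\<lambda>x. p 0 * exp (- t / 2) * exp (d * x - (\<rho> + 1 / t) * x\<^sup>2 / 2))"
      by (rule integrable.intros[OF gaussian])
    fix x
    have "0 \<le> (\<bar>x\<bar> - t)\<^sup>2 / (2 * t)"
      using t by simp
    also have "(\<bar>x\<bar> - t)\<^sup>2 / (2 * t) = x\<^sup>2 / (2 * t) - \<bar>x\<bar> + t / 2"
      using t by (simp add: field_simps power2_eq_square)
    finally have am_gm: "- t / 2 - x\<^sup>2 / (2 * t) \<le> - \<bar>x\<bar>"
      by simp
    have "p 0 * exp (- t / 2) * exp (d * x - (\<rho> + 1 / t) * x\<^sup>2 / 2)
        = p 0 * exp (d * x - \<rho> * x\<^sup>2 / 2) * exp (- t / 2 - x\<^sup>2 / (2 * t))"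
      using t by (simp add: exp_add[symmetric] exp_diff field_simps)
    also have "\<dots> \<le> p x * exp (- \<bar>x - 0\<bar>)"
      using p_ge_gaussian[of x] am_gm p_pos[of 0] p_pos[of x] by (intro mult_mono) auto
    finally show "p 0 * exp (- t / 2) * exp (d * x - (\<rho> + 1 / t) * x\<^sup>2 / 2)
        \<le> p x * exp (- \<bar>x - 0\<bar>)" .
  qed (rule integrable_laplace_conv_integrand)
  then show ?thesis
    unfolding has_bochner_integral_integral_eq[OF gaussian] .
qed

lemma laplace_conv_0_ge_sqrt:
  "exp (- 1 / 2) * sqrt (\<nu> / (\<rho> + 1)) * exp (- (d\<^sup>2 / (2 * \<nu>))) \<le> laplace_conv p 0"
proof -
  have sqrt_eq: "sqrt (2 * pi / (\<rho> + 1)) * sqrt (\<nu> / (2 * pi)) = sqrt (\<nu> / (\<rho> + 1))"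
    by (simp add: real_sqrt_mult[symmetric])
  have "exp (- 1 / 2) * sqrt (\<nu> / (\<rho> + 1)) * exp (- (d\<^sup>2 / (2 * \<nu>)))
      = exp (- 1 / 2) * sqrt (2 * pi / (\<rho> + 1)) * (sqrt (\<nu> / (2 * pi)) * exp (- (d\<^sup>2 / (2 * \<nu>))))"
    unfolding sqrt_eq[symmetric] by (simp only: mult_ac)
  also have "\<dots> \<le> exp (- 1 / 2) * sqrt (2 * pi / (\<rho> + 1)) * p 0"
    using p_0_ge rho_pos by (intro mult_left_mono) auto
  also have "\<dots> \<le> p 0 * exp (- 1 / 2) * (sqrt (2 * pi / (\<rho> + 1)) * exp (d\<^sup>2 / (2 * (\<rho> + 1))))"
    using p_pos[of 0] rho_pos by (simp add: mult_ac)
  also have "\<dots> \<le> laplace_conv p 0"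
    using laplace_conv_0_ge[of 1] by simp
  finally show ?thesis .
qed

lemma dlogp_0_sq_gt_4:
  assumes "laplace_conv p 0 / 5 \<le> kappa_tilde \<rho> \<nu>"
  shows "4 < d\<^sup>2"
proof (rule ccontr)
  assume "\<not> 4 < d\<^sup>2"
  then have "kappa_tilde \<rho> \<nu> < exp (- 1 / 2) / 5 * sqrt (\<nu> / (\<rho> + 1)) * exp (- (d\<^sup>2 / (2 * \<nu>)))"
    using nu_pos rho_pos by (intro kappa_tilde_less) auto
  with assms laplace_conv_0_ge_sqrt show False
    by simp
qed

lemma laplace_conv_0_ge_exp:
  assumes "4 < d\<^sup>2"
  shows "p 0 * (sqrt pi / sqrt \<rho>) * exp (d\<^sup>2 / (8 * \<rho>)) \<le> laplace_conv p 0"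
proof -
  have "1 / (2 * \<rho>) \<le> d\<^sup>2 / (8 * \<rho>)"
    using assms rho_pos by (simp add: field_simps)
  then have "p 0 * (sqrt pi / sqrt \<rho>) * exp (d\<^sup>2 / (8 * \<rho>)) * 1
      \<le> p 0 * (sqrt pi / sqrt \<rho>) * exp (d\<^sup>2 / (8 * \<rho>)) * exp (d\<^sup>2 / (8 * \<rho>) - 1 / (2 * \<rho>))"
    using p_pos[of 0] rho_pos by (intro mult_left_mono) auto
  also have "\<dots> = p 0 * exp (- (1 / \<rho>) / 2) * (sqrt (2 * pi / (\<rho> + 1 / (1 / \<rho>)))
                   * exp (d\<^sup>2 / (2 * (\<rho> + 1 / (1 / \<rho>)))))"
    using rho_pos by (simp add: real_sqrt_divide exp_add[symmetric] field_simps)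
  also have "\<dots> \<le> laplace_conv p 0"
    using rho_pos by (intro laplace_conv_0_ge) simp
  finally show ?thesis by simp
qed

lemma laplace_conv_0_ge_powr:
  assumes "4 < d\<^sup>2"
  shows "p 0 * (sqrt pi / (11 * sqrt \<rho>) * (sqrt \<nu> / (2 * p 0 * sqrt pi)) powr (\<nu> / (4 * \<rho>)))
           \<le> laplace_conv p 0 / 5"
proof -
  define c where "c = sqrt \<nu> / (2 * p 0 * sqrt pi)"
  have c_pos: "0 < c"
    unfolding c_def using nu_pos p_pos[of 0] by simp
  have "sqrt (2 * pi) \<le> 2 * sqrt pi"
    by (simp add: real_sqrt_mult) (use sqrt2_less_2 in \<open>simp add: mult_right_mono less_imp_le\<close>)
  then have "sqrt \<nu> / (2 * sqrt pi) \<le> sqrt (\<nu> / (2 * pi))"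
    using nu_pos by (simp add: real_sqrt_divide divide_left_mono)
  also have "\<dots> \<le> p 0 * exp (d\<^sup>2 / (2 * \<nu>))"
    using p_0_ge by (simp add: exp_minus field_simps)
  finally have "c \<le> exp (d\<^sup>2 / (2 * \<nu>))"
    unfolding c_def using p_pos[of 0] by (simp add: field_simps)
  then have "c powr (\<nu> / (4 * \<rho>)) \<le> exp (d\<^sup>2 / (2 * \<nu>)) powr (\<nu> / (4 * \<rho>))"
    using c_pos nu_pos rho_pos by (intro powr_mono2) auto
  also have "\<dots> = exp (d\<^sup>2 / (8 * \<rho>))"
    unfolding exp_powr_real using nu_pos rho_pos by (simp add: field_simps)
  finally have "p 0 * (sqrt pi / (11 * sqrt \<rho>) * c powr (\<nu> / (4 * \<rho>)))
      \<le> p 0 * (sqrt pi / (5 * sqrt \<rho>) * exp (d\<^sup>2 / (8 * \<rho>)))"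
    using p_pos[of 0] rho_pos
    by (intro mult_left_mono mult_mono divide_left_mono) auto
  also have "\<dots> \<le> laplace_conv p 0 / 5"
    using laplace_conv_0_ge_exp[OF assms] by simp
  finally show ?thesis unfolding c_def .
qed

lemma integrable_smoothed_p: "integrable lborel (\<lambda>z. std_normal_density z * p (s * z))"
  by (rule integrable_std_normal_mult_bounded[where C="p 0 * exp (d\<^sup>2 / (2 * \<nu>))"])
     (auto simp: abs_of_pos[OF p_pos] p_bounded)

lemma smoothed_p_le: "(LINT z|lborel. std_normal_density z * p (s * z)) \<le> p 0 * exp ((d * s)\<^sup>2 / 2)"
proof -
  have mgf: "has_bochner_integral lborel (\<lambda>z. p 0 * (std_normal_density z * exp ((d * s) * z)))
      (p 0 * exp ((d * s)\<^sup>2 / 2))"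
    by (intro has_bochner_integral_mult_right has_bochner_integral_std_normal_exp)
  have "(LINT z|lborel. std_normal_density z * p (s * z))
      \<le> (LINT z|lborel. p 0 * (std_normal_density z * exp ((d * s) * z)))"
  proof (rule integral_mono)
    show "integrable lborel (\<lambda>z. std_normal_density z * p (s * z))"
      by (rule integrable_smoothed_p)
    show "integrable lborel (\<lambda>z. p 0 * (std_normal_density z * exp ((d * s) * z)))"
      by (rule integrable.intros[OF mgf])
    fix z
    have p_le: "p (s * z) \<le> p 0 * exp ((d * s) * z)"
      using p_le_gaussian[of "s * z"] nu_pos p_pos[of 0]
      by (smt (verit, best) exp_le_cancel_iff mult_left_mono mult.assoc zero_le_power2
          mult_nonneg_nonneg divide_nonneg_pos)
    show "std_normal_density z * p (s * z) \<le> p 0 * (std_normal_density z * exp ((d * s) * z))"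
      using mult_left_mono[OF p_le, of "std_normal_density z"] by (simp add: mult.left_commute)
  qed
  then show ?thesis
    unfolding has_bochner_integral_integral_eq[OF mgf] .
qed

lemma exp_dlogp_0_sq_le: "exp (d\<^sup>2 / (2 * \<rho>)) \<le> sqrt \<rho> / (p 0 * sqrt (2 * pi))"
proof -
  have "exp (d\<^sup>2 / (2 * \<rho>)) * (p 0 * sqrt (2 * pi / \<rho>)) \<le> 1"
    using gaussian_mass_le_1 by (simp only: mult_ac)
  then show ?thesis
    using p_pos[of 0] rho_pos by (simp add: real_sqrt_divide field_simps)
qed

lemma smoothed_p_le_max:
  assumes "0 < s" and small: "s\<^sup>2 * \<rho>\<^sup>2 / \<nu> \<le> 1 / 8"
  shows "(LINT z|lborel. std_normal_density z * p (s * z))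
           \<le> p 0 * (sqrt 2 * max 1 ((sqrt \<rho> / (2 * p 0 * sqrt pi)) powr (\<nu> / (8 * \<rho>))))"
proof -
  define b where "b = sqrt \<rho> / (2 * p 0 * sqrt pi)"
  define e where "e = \<nu> / (8 * \<rho>)"
  have e_le_1: "e \<le> 1"
    unfolding e_def using nu_le_rho rho_pos by (simp add: divide_le_eq)
  have sqrt_2b: "sqrt 2 * b = sqrt \<rho> / (p 0 * sqrt (2 * pi))"
    unfolding b_def using p_pos[of 0] by (simp add: real_sqrt_mult field_simps)
  have exp_le: "exp (d\<^sup>2 / (2 * \<rho>)) \<le> sqrt 2 * b"
    unfolding sqrt_2b by (rule exp_dlogp_0_sq_le)
  have "\<rho> * s\<^sup>2 \<le> e"
    using small nu_pos rho_pos unfolding e_def by (simp add: field_simps power2_eq_square)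
  moreover have "1 \<le> sqrt 2 * b"
    using exp_le rho_pos by (smt (verit) one_le_exp_iff divide_nonneg_pos zero_le_power2)
  ultimately have "exp ((d * s)\<^sup>2 / 2) \<le> (sqrt 2 * b) powr e"
  proof -
    have "exp ((d * s)\<^sup>2 / 2) = exp (d\<^sup>2 / (2 * \<rho>)) powr (\<rho> * s\<^sup>2)"
      unfolding exp_powr_real using rho_pos by (simp add: field_simps power_mult_distrib)
    also have "\<dots> \<le> (sqrt 2 * b) powr (\<rho> * s\<^sup>2)"
      using exp_le rho_pos by (intro powr_mono2) auto
    also have "\<dots> \<le> (sqrt 2 * b) powr e"
      using \<open>\<rho> * s\<^sup>2 \<le> e\<close> \<open>1 \<le> sqrt 2 * b\<close> by (rule powr_mono)
    finally show ?thesis .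
  qed
  also have "\<dots> = sqrt 2 powr e * b powr e"
    by (rule powr_mult)
  also have "\<dots> \<le> sqrt 2 * max 1 (b powr e)"
    using powr_mono[OF e_le_1, of "sqrt 2"] by (intro mult_mono) auto
  finally have "p 0 * exp ((d * s)\<^sup>2 / 2) \<le> p 0 * (sqrt 2 * max 1 (b powr e))"
    using p_pos[of 0] by simp
  with smoothed_p_le[of s] show ?thesis
    unfolding b_def e_def by linarith
qed

lemma DERIV_Lsig:
  "(Lsig p has_real_derivative
      s * (Lsig p s - 2 * (LINT z|lborel. std_normal_density z * p (s * z)))) (at s)"
proof -
  let ?F = "laplace_conv p" and ?G = "laplace_conv_deriv p"
  have smoothed_F_integrable: "integrable lborel (\<lambda>z. std_normal_density z * ?F (s * z))"
    by (rule integrable_std_normal_mult_bounded[where C=1])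
       (auto simp: laplace_conv_le_1 abs_of_nonneg[OF laplace_conv_nonneg])
  note smoothed_p_integrable = integrable_smoothed_p[of s]
  have combination: "(\<lambda>z. std_normal_density z * (s * (?F (s * z) - 2 * p (s * z))))
      = (\<lambda>z. s * (std_normal_density z * ?F (s * z)) - 2 * s * (std_normal_density z * p (s * z)))"
    by (simp add: fun_eq_iff algebra_simps)
  have "(LINT z|lborel. std_normal_density z * (z * ?G (s * z)))
      = (LINT z|lborel. std_normal_density z * (s * (?F (s * z) - 2 * p (s * z))))"
  proof (rule std_normal_stein_identity[where C=1])
    show "((\<lambda>z. ?G (s * z)) has_real_derivative s * (?F (s * z) - 2 * p (s * z))) (at z)" for z
      using DERIV_chain2[OF DERIV_laplace_conv_deriv DERIV_cmult_Id, of s z]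
      by (simp add: mult.commute)
    show "continuous_on UNIV (\<lambda>z. s * (?F (s * z) - 2 * p (s * z)))"
      by (intro continuous_intros continuous_on_compose2[OF continuous_laplace_conv]
          continuous_on_compose2[OF p_continuous]) auto
    show "integrable lborel (\<lambda>z. std_normal_density z * (s * (?F (s * z) - 2 * p (s * z))))"
      unfolding combination using smoothed_F_integrable smoothed_p_integrable by simp
  qed (rule abs_laplace_conv_deriv_le_1)
  also have "\<dots> = s * (Lsig p s - 2 * (LINT z|lborel. std_normal_density z * p (s * z)))"
    unfolding combination Lsig_eq_smoothed_laplace_conv
    using smoothed_F_integrable smoothed_p_integrable by (simp add: algebra_simps)
  finally have derivative_eq: "(LINT z|lborel. std_normal_density z * (z * ?G (s * z)))
      = s * (Lsig p s - 2 * (LINT z|lborel. std_normal_density z * p (s * z)))" .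
  have "Lsig p = (\<lambda>s. LINT z|lborel. std_normal_density z * ?F (s * z))"
    using Lsig_eq_smoothed_laplace_conv by (rule ext)
  with DERIV_std_normal_smoothing[OF DERIV_laplace_conv laplace_conv_deriv_measurable, of 1 1 s]
  show ?thesis
    using laplace_conv_le_1 laplace_conv_nonneg abs_laplace_conv_deriv_le_1
    by (simp add: derivative_eq abs_of_nonneg)
qed

end

theorem lemma7:
  fixes p dlogp :: "real \<Rightarrow> real" and \<sigma> \<rho> \<nu> :: real
  assumes nu_pos: "0 < \<nu>" and nu_le_rho: "\<nu> \<le> \<rho>"
    and p_pos: "\<And>x. 0 < p x"
    and p_int: "integrable lborel p" and p_one: "(LINT x|lborel. p x) = 1"
    and dlogp: "\<And>x. ((\<lambda>t. ln (p t)) has_real_derivative dlogp x) (at x)"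
    and strong_concave_smooth: "\<And>x y. x < y \<Longrightarrow>
          - \<rho> * (y - x) \<le> dlogp y - dlogp x \<and> dlogp y - dlogp x \<le> - \<nu> * (y - x)"
    and sigma_pos: "0 < \<sigma>"
    and sigma_le1: "\<sigma> \<le> 1"
    and sigma_le2: "\<sigma> \<le> 4 * sqrt 2 / sqrt pi"
    and gamma_le: "gamma_star \<sigma> \<le> min 1 (1 / (4 * sqrt \<rho>))"
    and small: "\<sigma>\<^sup>2 * \<rho>\<^sup>2 / \<nu> \<le> 1 / 8"
    and loss_small: "Lsig p \<sigma> \<le> kappa_tilde \<rho> \<nu>"
  shows "\<exists>D. ((\<lambda>s. Lsig p s) has_real_derivative D) (at \<sigma>) \<and>
           D \<ge> p 0 * \<sigma> * (sqrt pi / (11 * sqrt \<rho>) *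
                 (sqrt \<nu> / (2 * p 0 * sqrt pi)) powr (\<nu> / (4 * \<rho>))
               - 2 * sqrt 2 * max 1 ((sqrt \<rho> / (2 * p 0 * sqrt pi)) powr (\<nu> / (8 * \<rho>))))"
proof -
  interpret strongly_log_concave_density p dlogp \<rho> \<nu>
    using nu_pos nu_le_rho p_pos p_one dlogp strong_concave_smooth by unfold_locales auto
  define A where "A = sqrt pi / (11 * sqrt \<rho>) * (sqrt \<nu> / (2 * p 0 * sqrt pi)) powr (\<nu> / (4 * \<rho>))"
  define M where "M = max 1 ((sqrt \<rho> / (2 * p 0 * sqrt pi)) powr (\<nu> / (8 * \<rho>)))"
  define J where "J = (LINT z|lborel. std_normal_density z * p (\<sigma> * z))"
  have F0_le_L: "laplace_conv p 0 / 5 \<le> Lsig p \<sigma>"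
    using sigma_pos sigma_le1 by (rule Lsig_ge_laplace_conv_0)
  then have "4 < (dlogp 0)\<^sup>2"
    using loss_small by (intro dlogp_0_sq_gt_4) linarith
  then have "p 0 * A \<le> Lsig p \<sigma>"
    unfolding A_def using laplace_conv_0_ge_powr F0_le_L by (meson order_trans)
  moreover have "J \<le> p 0 * (sqrt 2 * M)"
    unfolding J_def M_def using sigma_pos small by (rule smoothed_p_le_max)
  ultimately have "\<sigma> * (p 0 * A - 2 * (p 0 * (sqrt 2 * M))) \<le> \<sigma> * (Lsig p \<sigma> - 2 * J)"
    using sigma_pos by (intro mult_left_mono) auto
  then have "p 0 * \<sigma> * (A - 2 * sqrt 2 * M) \<le> \<sigma> * (Lsig p \<sigma> - 2 * J)"
    by (simp add: algebra_simps)
  with DERIV_Lsig[of \<sigma>] show ?thesis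
    unfolding A_def M_def J_def by blast
qed

end
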